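(* Given $a,b\in\ell_\infty$, there is a continuous symmetric bilinear form $B$ on $\ell_1$ such that for every $z_1\in\ell_1''$ and every $z_2\in c_0^\perp\subseteq\ell_1''$, $$\tilde B(z_1,z_2)=z_1(a)\,z_2(b).$$
   Context: $\ell_1''=\ell_\infty'$, and $c_0^\perp\subseteq\ell_1''$ is the annihilator of $c_0\subseteq\ell_\infty$; one has $\ell_1''=\ell_1\oplus c_0^\perp$. For a continuous bilinear form $B$ on $\ell_1$, its canonical (Aron–Berner) extension is $\tilde B(z_1,z_2)=\lim_{\alpha}\lim_{\beta}B(x_\alpha,y_\beta)$, where $(x_\alpha),(y_\beta)\subseteq\ell_1$ are nets weak-star converging to $z_1$ and $z_2$ respectively (the limit in the second variable taken first). *)

theory Defs
  imports "HOL-Analysis.Analysis"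
begin

definition l1 :: "(nat \<Rightarrow> real) set" where
  "l1 = {x. summable (\<lambda>n. \<bar>x n\<bar>)}"

definition linf :: "(nat \<Rightarrow> real) set" where
  "linf = {a. bounded (range a)}"

definition c0 :: "(nat \<Rightarrow> real) set" where
  "c0 = {a. a \<longlonglongrightarrow> 0}"

definition l1_norm :: "(nat \<Rightarrow> real) \<Rightarrow> real" where
  "l1_norm x = (\<Sum>n. \<bar>x n\<bar>)"

definition linf_norm :: "(nat \<Rightarrow> real) \<Rightarrow> real" where
  "linf_norm a = (SUP n. \<bar>a n\<bar>)"

text \<open>Duality pairing of x in l1 with c in linf; this is also the canonical
  embedding of l1 into l1'' = linf'.\<close>
definition pairing :: "(nat \<Rightarrow> real) \<Rightarrow> (nat \<Rightarrow> real) \<Rightarrow> real" where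
  "pairing x c = (\<Sum>n. x n * c n)"

text \<open>The bidual l1'' = linf' : continuous linear functionals on linf
  (only their values on linf matter).\<close>
definition bidual :: "((nat \<Rightarrow> real) \<Rightarrow> real) set" where
  "bidual = {z. (\<forall>a\<in>linf. \<forall>b\<in>linf. z (\<lambda>n. a n + b n) = z a + z b)
               \<and> (\<forall>r. \<forall>a\<in>linf. z (\<lambda>n. r * a n) = r * z a)
               \<and> (\<exists>C. \<forall>a\<in>linf. \<bar>z a\<bar> \<le> C * linf_norm a)}"

definition c0_perp :: "((nat \<Rightarrow> real) \<Rightarrow> real) set" where
  "c0_perp = {z\<in>bidual. \<forall>a\<in>c0. z a = 0}"

definition cont_sym_bilinear_l1 :: "((nat \<Rightarrow> real) \<Rightarrow> (nat \<Rightarrow> real) \<Rightarrow> real) \<Rightarrow> bool" where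
  "cont_sym_bilinear_l1 B \<longleftrightarrow>
     (\<forall>x\<in>l1. \<forall>x'\<in>l1. \<forall>y\<in>l1. B (\<lambda>n. x n + x' n) y = B x y + B x' y)
   \<and> (\<forall>r. \<forall>x\<in>l1. \<forall>y\<in>l1. B (\<lambda>n. r * x n) y = r * B x y)
   \<and> (\<forall>x\<in>l1. \<forall>y\<in>l1. \<forall>y'\<in>l1. B x (\<lambda>n. y n + y' n) = B x y + B x y')
   \<and> (\<forall>r. \<forall>x\<in>l1. \<forall>y\<in>l1. B x (\<lambda>n. r * y n) = r * B x y)
   \<and> (\<forall>x\<in>l1. \<forall>y\<in>l1. B x y = B y x)
   \<and> (\<exists>C. \<forall>x\<in>l1. \<forall>y\<in>l1. \<bar>B x y\<bar> \<le> C * l1_norm x * l1_norm y)"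

text \<open>A net in l1 is represented by the (proper) filter it generates on l1:
  F is a net in l1 weak-star converging to z in l1''.\<close>
definition wstar_net :: "(nat \<Rightarrow> real) filter \<Rightarrow> ((nat \<Rightarrow> real) \<Rightarrow> real) \<Rightarrow> bool" where
  "wstar_net F z \<longleftrightarrow> F \<noteq> bot \<and> eventually (\<lambda>x. x \<in> l1) F
     \<and> (\<forall>c\<in>linf. ((\<lambda>x. pairing x c) \<longlongrightarrow> z c) F)"

text \<open>Aron--Berner extension: the value of the canonical extension of B at
  (z1,z2) is v, i.e. for all nets x_alpha -> z1, y_beta -> z2 (weak-star) in l1,
  lim_alpha lim_beta B(x_alpha, y_beta) exists and equals v
  (the limit in the second variable being taken first).\<close>
definition AB_ext_value ::
  "((nat \<Rightarrow> real) \<Rightarrow> (nat \<Rightarrow> real) \<Rightarrow> real) \<Rightarrow> ((nat \<Rightarrow> real) \<Rightarrow> real)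
     \<Rightarrow> ((nat \<Rightarrow> real) \<Rightarrow> real) \<Rightarrow> real \<Rightarrow> bool" where
  "AB_ext_value B z1 z2 v \<longleftrightarrow>
     (\<forall>F G. wstar_net F z1 \<longrightarrow> wstar_net G z2 \<longrightarrow>
        (\<exists>g. (\<forall>x\<in>l1. ((\<lambda>y. B x y) \<longlongrightarrow> g x) G) \<and> (g \<longlongrightarrow> v) F))"

end

(* The form is B(x, y) = sum_{m<n} a_m b_n (x_m y_n + x_n y_m), i.e. the symmetric kernel
   K(m, n) = a_min(m,n) b_max(m,n) off the diagonal and 0 on it.  For fixed x in l1, B(x, -) is
   the pairing with the column vector c_n = sum_m x_m K(m, n).  Since K(m, n) = a_m b_n for m < n,
   c_n - <x, a> b_n only involves the tail sum_{m >= n} |x_m|, so it lies in c0.  A functional z2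
   vanishing on c0 therefore sends c to <x, a> z2(b): this is the inner limit along y_beta -> z2,
   and the outer limit along x_alpha -> z1 is z1(a) z2(b). *)

theory Submission
  imports Defs
begin

lemma abs_summable_infsum_eq_suminf:
  fixes f :: "nat \<Rightarrow> 'a::banach"
  assumes "summable (\<lambda>n. norm (f n))"
  shows "infsum f UNIV = suminf f"
  using norm_summable_imp_has_sum[OF assms summable_sums[OF summable_norm_cancel[OF assms]]]
  by (rule infsumI)

lemma real_summable_on_dominated:
  fixes f g :: "'a \<Rightarrow> real"
  assumes g: "g summable_on A" and le: "\<And>z. z \<in> A \<Longrightarrow> \<bar>f z\<bar> \<le> g z"
  shows "f summable_on A" and "\<bar>infsum f A\<bar> \<le> infsum g A"
proof -
  have abs: "(\<lambda>z. norm (f z)) summable_on A"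
    using Infinite_Sum.abs_summable_on_comparison_test'[OF g, of f] le by simp
  then show "f summable_on A"
    by (rule abs_summable_summable)
  have "\<bar>infsum f A\<bar> \<le> infsum (\<lambda>z. \<bar>f z\<bar>) A"
    using norm_infsum_bound[OF abs] by simp
  also have "\<dots> \<le> infsum g A"
    using abs g le by (intro infsum_mono) auto
  finally show "\<bar>infsum f A\<bar> \<le> infsum g A" .
qed

lemma suminf_vanishing_below_tendsto_zero:
  fixes d :: "nat \<Rightarrow> nat \<Rightarrow> real"
  assumes g: "summable g" and le: "\<And>n m. \<bar>d n m\<bar> \<le> g m"
    and vanish: "\<And>n m. m < n \<Longrightarrow> d n m = 0"
  shows "(\<lambda>n. suminf (d n)) \<longlonglongrightarrow> 0"
proof (rule Lim_null_comparison)
  have abs_summable: "summable (\<lambda>m. \<bar>d n m\<bar>)" for n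
    by (rule summable_comparison_test'[where N=0, OF g]) (simp add: le)
  have "\<bar>suminf (d n)\<bar> \<le> (\<Sum>i. g (i + n))" for n
  proof -
    have "(\<Sum>i<n. d n i) = 0"
      by (rule sum.neutral) (simp add: vanish)
    then have "suminf (d n) = (\<Sum>i. d n (i + n))"
      using suminf_minus_initial_segment[OF summable_rabs_cancel[OF abs_summable], of n n]
      by simp
    also have "\<bar>\<dots>\<bar> \<le> (\<Sum>i. \<bar>d n (i + n)\<bar>)"
      using summable_ignore_initial_segment[OF abs_summable] by (rule summable_rabs)
    also have "\<dots> \<le> (\<Sum>i. g (i + n))"
      using summable_ignore_initial_segment[OF abs_summable] summable_ignore_initial_segment[OF g]
      by (intro suminf_le le)
    finally show ?thesis .
  qed
  then show "\<forall>\<^sub>F n in sequentially. norm (suminf (d n)) \<le> (\<Sum>i. g (i + n))"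
    by simp
  show "(\<lambda>n. \<Sum>i. g (i + n)) \<longlonglongrightarrow> 0"
    using g by (rule suminf_exist_split2)
qed

lemma linfI:
  assumes "\<And>n. \<bar>f n\<bar> \<le> M"
  shows "f \<in> linf"
  using assms unfolding linf_def bounded_iff by auto

lemma linf_bound:
  assumes "f \<in> linf"
  obtains M where "\<And>n. \<bar>f n\<bar> \<le> M"
  using assms unfolding linf_def bounded_iff by auto

lemma c0_subset_linf: "c0 \<subseteq> linf"
  unfolding c0_def linf_def
  by (auto simp: Bseq_eq_bounded[symmetric] intro: convergent_imp_Bseq convergentI)

lemma abs_mult_le_bounds:
  fixes a b :: "nat \<Rightarrow> real"
  assumes "\<And>n. \<bar>a n\<bar> \<le> Ma" "\<And>n. \<bar>b n\<bar> \<le> Mb"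
  shows "\<bar>a i * b j\<bar> \<le> Ma * Mb"
proof -
  have "0 \<le> Ma"
    using assms(1)[of 0] abs_ge_zero[of "a 0"] by linarith
  then show ?thesis
    unfolding abs_mult using assms by (intro mult_mono) auto
qed

lemma l1_has_sum_abs:
  assumes "x \<in> l1"
  shows "((\<lambda>n. \<bar>x n\<bar>) has_sum l1_norm x) UNIV"
  using assms unfolding l1_def l1_norm_def
  by (intro norm_summable_imp_has_sum summable_sums) auto

lemma l1_abs_product_has_sum:
  assumes "x \<in> l1" "y \<in> l1"
  shows "((\<lambda>(m, n). \<bar>x m\<bar> * \<bar>y n\<bar>) has_sum l1_norm x * l1_norm y) UNIV"
proof -
  have rows: "((\<lambda>n. \<bar>x m\<bar> * \<bar>y n\<bar>) has_sum \<bar>x m\<bar> * l1_norm y) UNIV" for m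
    using l1_has_sum_abs[OF assms(2)] by (rule has_sum_cmult_right)
  have cols: "((\<lambda>m. \<bar>x m\<bar> * l1_norm y) has_sum l1_norm x * l1_norm y) UNIV"
    using l1_has_sum_abs[OF assms(1)] by (rule has_sum_cmult_left)
  have "(\<lambda>(m, n). \<bar>x m\<bar> * \<bar>y n\<bar>) summable_on UNIV \<times> UNIV"
    using rows cols by (intro summable_on_SigmaI) (auto dest: has_sum_imp_summable)
  with rows cols have "((\<lambda>(m, n). \<bar>x m\<bar> * \<bar>y n\<bar>) has_sum l1_norm x * l1_norm y) (UNIV \<times> UNIV)"
    by (intro has_sum_SigmaI) auto
  then show ?thesis
    by simp
qed

lemma l1_product_dominated:
  assumes "x \<in> l1" "y \<in> l1" and le: "\<And>m n. \<bar>w m n\<bar> \<le> C * (\<bar>x m\<bar> * \<bar>y n\<bar>)"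
  shows "(\<lambda>(m, n). w m n) summable_on UNIV"
    and "\<bar>infsum (\<lambda>(m, n). w m n) UNIV\<bar> \<le> C * (l1_norm x * l1_norm y)"
proof -
  have dom: "((\<lambda>(m, n). C * (\<bar>x m\<bar> * \<bar>y n\<bar>)) has_sum C * (l1_norm x * l1_norm y)) UNIV"
    using has_sum_cmult_right[OF l1_abs_product_has_sum[OF assms(1,2)], of C]
    by (simp add: case_prod_unfold)
  have le': "\<bar>(\<lambda>(m, n). w m n) p\<bar> \<le> (\<lambda>(m, n). C * (\<bar>x m\<bar> * \<bar>y n\<bar>)) p" for p
    by (cases p) (simp add: le)
  show "(\<lambda>(m, n). w m n) summable_on UNIV"
    using has_sum_imp_summable[OF dom] le' by (rule real_summable_on_dominated)
  show "\<bar>infsum (\<lambda>(m, n). w m n) UNIV\<bar> \<le> C * (l1_norm x * l1_norm y)"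
    using real_summable_on_dominated(2)[OF has_sum_imp_summable[OF dom] le'] infsumI[OF dom]
    by simp
qed

lemma l1_mult_bounded_abs_summable:
  assumes x: "x \<in> l1" and c: "\<And>n. \<bar>c n\<bar> \<le> M"
  shows "summable (\<lambda>n. \<bar>x n * c n\<bar>)"
proof (rule summable_comparison_test'[where N=0])
  show "summable (\<lambda>n. \<bar>x n\<bar> * M)"
    using x unfolding l1_def by (simp add: summable_mult2)
  show "norm \<bar>x n * c n\<bar> \<le> \<bar>x n\<bar> * M" for n
    using mult_left_mono[OF c abs_ge_zero[of "x n"]] by (simp add: abs_mult mult.commute)
qed

lemma abs_pairing_le:
  assumes x: "x \<in> l1" and c: "\<And>n. \<bar>c n\<bar> \<le> M"
  shows "\<bar>pairing x c\<bar> \<le> M * l1_norm x"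
proof -
  have summable: "summable (\<lambda>n. \<bar>x n * c n\<bar>)"
    using x c by (rule l1_mult_bounded_abs_summable)
  have "\<bar>pairing x c\<bar> \<le> (\<Sum>n. \<bar>x n * c n\<bar>)"
    unfolding pairing_def using summable by (rule summable_rabs)
  also have "\<dots> \<le> (\<Sum>n. M * \<bar>x n\<bar>)"
  proof (rule suminf_le)
    show "\<bar>x n * c n\<bar> \<le> M * \<bar>x n\<bar>" for n
      using mult_left_mono[OF c abs_ge_zero[of "x n"]] by (simp add: abs_mult mult.commute)
    show "summable (\<lambda>n. M * \<bar>x n\<bar>)"
      using x unfolding l1_def by (simp add: summable_mult)
  qed (fact summable)
  also have "\<dots> = M * l1_norm x"
    using x unfolding l1_def l1_norm_def by (simp add: suminf_mult)
  finally show ?thesis .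
qed

definition kernel_form :: "(nat \<Rightarrow> nat \<Rightarrow> real) \<Rightarrow> (nat \<Rightarrow> real) \<Rightarrow> (nat \<Rightarrow> real) \<Rightarrow> real" where
  "kernel_form K x y = infsum (\<lambda>(m, n). K m n * x m * y n) UNIV"

definition kernel_column :: "(nat \<Rightarrow> nat \<Rightarrow> real) \<Rightarrow> (nat \<Rightarrow> real) \<Rightarrow> nat \<Rightarrow> real" where
  "kernel_column K x n = pairing x (\<lambda>m. K m n)"

lemma kernel_form_scale_left: "kernel_form K (\<lambda>n. r * x n) y = r * kernel_form K x y"
  unfolding kernel_form_def
  by (subst infsum_cmult_right'[symmetric]) (simp add: case_prod_unfold mult_ac)

lemma kernel_form_commute:
  assumes "\<And>m n. K m n = K n m"
  shows "kernel_form K x y = kernel_form K y x"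
proof -
  have "kernel_form K y x = infsum ((\<lambda>(m, n). K m n * y m * x n) \<circ> prod.swap) UNIV"
    unfolding kernel_form_def by (simp add: infsum_reindex[symmetric])
  also have "(\<lambda>(m, n). K m n * y m * x n) \<circ> prod.swap = (\<lambda>(m, n). K m n * x m * y n)"
    using assms by (auto simp: mult_ac)
  finally show ?thesis
    unfolding kernel_form_def by simp
qed

context
  fixes K :: "nat \<Rightarrow> nat \<Rightarrow> real" and C :: real
  assumes K_bound: "\<And>m n. \<bar>K m n\<bar> \<le> C"
begin

lemma kernel_form_summable:
  assumes "x \<in> l1" "y \<in> l1"
  shows "(\<lambda>(m, n). K m n * x m * y n) summable_on UNIV"
  using assms by (rule l1_product_dominated(1)[where C = C])
    (simp add: abs_mult mult.assoc mult_right_mono K_bound)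

lemma abs_kernel_form_le:
  assumes "x \<in> l1" "y \<in> l1"
  shows "\<bar>kernel_form K x y\<bar> \<le> C * l1_norm x * l1_norm y"
  using l1_product_dominated(2)[OF assms, of "\<lambda>m n. K m n * x m * y n" C]
  unfolding kernel_form_def by (simp add: abs_mult mult_right_mono K_bound mult.assoc)

lemma kernel_form_add_left:
  assumes "x \<in> l1" "x' \<in> l1" "y \<in> l1"
  shows "kernel_form K (\<lambda>n. x n + x' n) y = kernel_form K x y + kernel_form K x' y"
  unfolding kernel_form_def
  by (subst infsum_add[OF kernel_form_summable[OF assms(1,3)] kernel_form_summable[OF assms(2,3)],
        symmetric])
     (simp add: case_prod_unfold algebra_simps)

lemma kernel_column_bound:
  assumes "x \<in> l1"
  shows "\<bar>kernel_column K x n\<bar> \<le> C * l1_norm x"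
  unfolding kernel_column_def using assms K_bound by (rule abs_pairing_le)

lemma kernel_form_eq_pairing_column:
  assumes "x \<in> l1" "y \<in> l1"
  shows "kernel_form K x y = pairing y (kernel_column K x)"
proof -
  have S: "(\<lambda>(m, n). K m n * x m * y n) summable_on UNIV \<times> UNIV"
    using kernel_form_summable[OF assms] by simp
  have column: "infsum (\<lambda>m. x m * K m n) UNIV = kernel_column K x n" for n
    unfolding kernel_column_def pairing_def
    using l1_mult_bounded_abs_summable[OF assms(1) K_bound]
    by (intro abs_summable_infsum_eq_suminf) simp
  have "kernel_form K x y = infsum (\<lambda>m. infsum (\<lambda>n. K m n * x m * y n) UNIV) UNIV"
    unfolding kernel_form_def using infsum_Sigma_banach[OF S] by simp
  also have "\<dots> = infsum (\<lambda>n. infsum (\<lambda>m. K m n * x m * y n) UNIV) UNIV"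
    using S by (rule infsum_swap_banach)
  also have "\<dots> = infsum (\<lambda>n. y n * kernel_column K x n) UNIV"
    unfolding column[symmetric] infsum_cmult_right'[symmetric] by (simp add: mult_ac)
  also have "\<dots> = pairing y (kernel_column K x)"
    unfolding pairing_def
    using l1_mult_bounded_abs_summable[OF assms(2) kernel_column_bound[OF assms(1)]]
    by (intro abs_summable_infsum_eq_suminf) simp
  finally show ?thesis .
qed

lemma cont_sym_bilinear_l1_kernel_form:
  assumes sym: "\<And>m n. K m n = K n m"
  shows "cont_sym_bilinear_l1 (kernel_form K)"
proof -
  have swap: "kernel_form K x y = kernel_form K y x" for x y
    using sym by (rule kernel_form_commute)
  have add_right: "kernel_form K x (\<lambda>n. y n + y' n) = kernel_form K x y + kernel_form K x y'"
    if "x \<in> l1" "y \<in> l1" "y' \<in> l1" for x y y'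
    using kernel_form_add_left[OF that(2,3,1)] by (simp only: swap)
  have scale_right: "kernel_form K x (\<lambda>n. r * y n) = r * kernel_form K x y" for r x y
    using kernel_form_scale_left[of K r y x] by (simp only: swap)
  show ?thesis
    unfolding cont_sym_bilinear_l1_def
    using kernel_form_add_left add_right kernel_form_scale_left scale_right swap
      abs_kernel_form_le
    by blast
qed

end

definition triangle_kernel :: "(nat \<Rightarrow> real) \<Rightarrow> (nat \<Rightarrow> real) \<Rightarrow> nat \<Rightarrow> nat \<Rightarrow> real" where
  "triangle_kernel a b m n =
     (if m < n then a m * b n else if n < m then a n * b m else 0)"

lemma triangle_kernel_commute: "triangle_kernel a b m n = triangle_kernel a b n m"
  by (auto simp: triangle_kernel_def)

lemma abs_triangle_kernel_le:
  assumes "\<And>n. \<bar>a n\<bar> \<le> Ma" "\<And>n. \<bar>b n\<bar> \<le> Mb"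
  shows "\<bar>triangle_kernel a b m n\<bar> \<le> Ma * Mb"
proof -
  note prod_le = abs_mult_le_bounds[where a = a and b = b, OF assms]
  have "0 \<le> Ma * Mb"
    using abs_ge_zero prod_le[of 0 0] by (rule order_trans)
  with prod_le show ?thesis
    by (simp add: triangle_kernel_def)
qed

lemma triangle_kernel_column_asymptotic:
  assumes x: "x \<in> l1" and a: "\<And>n. \<bar>a n\<bar> \<le> Ma" and b: "\<And>n. \<bar>b n\<bar> \<le> Mb"
  shows "(\<lambda>n. kernel_column (triangle_kernel a b) x n - pairing x a * b n) \<longlonglongrightarrow> 0"
proof -
  define d where "d n = (\<lambda>m. x m * (triangle_kernel a b m n - a m * b n))" for n
  have "kernel_column (triangle_kernel a b) x n - pairing x a * b n = suminf (d n)" for n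
  proof -
    have "(\<lambda>m. x m * triangle_kernel a b m n) sums kernel_column (triangle_kernel a b) x n"
      unfolding kernel_column_def pairing_def
      using l1_mult_bounded_abs_summable[OF x abs_triangle_kernel_le[of a Ma b Mb, OF a b]]
      by (rule summable_sums[OF summable_rabs_cancel])
    moreover have "(\<lambda>m. x m * a m * b n) sums (pairing x a * b n)"
      unfolding pairing_def using l1_mult_bounded_abs_summable[OF x a]
      by (rule sums_mult2[OF summable_sums[OF summable_rabs_cancel]])
    ultimately have "d n sums (kernel_column (triangle_kernel a b) x n - pairing x a * b n)"
      unfolding d_def right_diff_distrib mult.assoc[symmetric] by (rule sums_diff)
    then show ?thesis
      by (rule sums_unique)
  qed
  moreover have "(\<lambda>n. suminf (d n)) \<longlonglongrightarrow> 0"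
  proof (rule suminf_vanishing_below_tendsto_zero)
    show "summable (\<lambda>m. 2 * Ma * Mb * \<bar>x m\<bar>)"
      using x unfolding l1_def by (intro summable_mult) simp
    show "\<bar>d n m\<bar> \<le> 2 * Ma * Mb * \<bar>x m\<bar>" for n m
    proof -
      have "\<bar>triangle_kernel a b m n - a m * b n\<bar> \<le> 2 * Ma * Mb"
        using abs_triangle_kernel_le[of a Ma b Mb m n, OF a b]
          abs_mult_le_bounds[where a = a and b = b and i = m and j = n, OF a b]
          abs_triangle_ineq4[of "triangle_kernel a b m n" "a m * b n"] by linarith
      then have "\<bar>x m\<bar> * \<bar>triangle_kernel a b m n - a m * b n\<bar> \<le> \<bar>x m\<bar> * (2 * Ma * Mb)"
        by (simp add: mult_left_mono)
      then show ?thesis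
        by (simp add: d_def abs_mult mult_ac)
    qed
    show "d n m = 0" if "m < n" for n m
      using that by (simp add: d_def triangle_kernel_def)
  qed
  ultimately show ?thesis
    by simp
qed

lemma c0_perp_apply_asymptotic:
  assumes z: "z \<in> c0_perp" and b: "b \<in> linf" and lim: "(\<lambda>n. c n - r * b n) \<longlonglongrightarrow> 0"
  shows "z c = r * z b"
proof -
  define d where "d = (\<lambda>n. c n - r * b n)"
  have "d \<in> c0"
    using lim by (simp add: c0_def d_def)
  obtain M where "\<And>n. \<bar>b n\<bar> \<le> M"
    using linf_bound[OF b] by blast
  then have rb: "(\<lambda>n. r * b n) \<in> linf"
    by (intro linfI[of _ "\<bar>r\<bar> * M"]) (simp add: abs_mult mult_left_mono)
  have "d \<in> linf"
    using \<open>d \<in> c0\<close> c0_subset_linf by blast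
  have z_add: "z (\<lambda>n. u n + w n) = z u + z w" if "u \<in> linf" "w \<in> linf" for u w
    using z that unfolding c0_perp_def bidual_def by blast
  have z_scale: "z (\<lambda>n. r * u n) = r * z u" if "u \<in> linf" for u
    using z that unfolding c0_perp_def bidual_def by blast
  have "c = (\<lambda>n. r * b n + d n)"
    by (simp add: d_def)
  then have "z c = r * z b + z d"
    using z_add[OF rb \<open>d \<in> linf\<close>] z_scale[OF b] by simp
  also have "z d = 0"
    using z \<open>d \<in> c0\<close> unfolding c0_perp_def by blast
  finally show ?thesis
    by simp
qed

lemma AB_ext_value_of_sections:
  assumes a: "a \<in> linf"
    and sections_linf: "\<And>x. x \<in> l1 \<Longrightarrow> c x \<in> linf"
    and B_eq: "\<And>x y. x \<in> l1 \<Longrightarrow> y \<in> l1 \<Longrightarrow> B x y = pairing y (c x)"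
    and z2_sections: "\<And>x. x \<in> l1 \<Longrightarrow> z2 (c x) = pairing x a * v"
  shows "AB_ext_value B z1 z2 (z1 a * v)"
  unfolding AB_ext_value_def
proof (intro allI impI)
  fix F G
  assume F: "wstar_net F z1" and G: "wstar_net G z2"
  have inner: "((\<lambda>y. B x y) \<longlongrightarrow> pairing x a * v) G" if x: "x \<in> l1" for x
  proof -
    have "((\<lambda>y. pairing y (c x)) \<longlongrightarrow> z2 (c x)) G"
      using G sections_linf[OF x] unfolding wstar_net_def by blast
    moreover have "\<forall>\<^sub>F y in G. y \<in> l1"
      using G unfolding wstar_net_def by blast
    then have "\<forall>\<^sub>F y in G. pairing y (c x) = B x y"
      by (rule eventually_mono) (simp add: B_eq x)
    ultimately have "((\<lambda>y. B x y) \<longlongrightarrow> z2 (c x)) G"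
      by (rule Lim_transform_eventually)
    then show ?thesis
      by (simp add: z2_sections[OF x])
  qed
  have "((\<lambda>x. pairing x a) \<longlongrightarrow> z1 a) F"
    using F a unfolding wstar_net_def by blast
  then have "((\<lambda>x. pairing x a * v) \<longlongrightarrow> z1 a * v) F"
    by (rule tendsto_mult_right)
  with inner show "\<exists>g. (\<forall>x\<in>l1. ((\<lambda>y. B x y) \<longlongrightarrow> g x) G) \<and> (g \<longlongrightarrow> z1 a * v) F"
    by (intro exI[of _ "\<lambda>x. pairing x a * v"]) simp
qed

theorem lemma2p3:
  fixes a b :: "nat \<Rightarrow> real"
  assumes "a \<in> linf" and "b \<in> linf"
  shows "\<exists>B. cont_sym_bilinear_l1 B \<and>
           (\<forall>z1\<in>bidual. \<forall>z2\<in>c0_perp. AB_ext_value B z1 z2 (z1 a * z2 b))"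
proof -
  obtain Ma Mb where a_le: "\<And>n. \<bar>a n\<bar> \<le> Ma" and b_le: "\<And>n. \<bar>b n\<bar> \<le> Mb"
    using linf_bound[OF assms(1)] linf_bound[OF assms(2)] by metis
  define K where "K = triangle_kernel a b"
  have K_le: "\<bar>K m n\<bar> \<le> Ma * Mb" for m n
    unfolding K_def using a_le b_le by (rule abs_triangle_kernel_le)
  have "cont_sym_bilinear_l1 (kernel_form K)"
    using K_le by (rule cont_sym_bilinear_l1_kernel_form) (simp add: K_def triangle_kernel_commute)
  moreover have "AB_ext_value (kernel_form K) z1 z2 (z1 a * z2 b)" if z2: "z2 \<in> c0_perp" for z1 z2
  proof (rule AB_ext_value_of_sections[where c = "kernel_column K"])
    show "a \<in> linf"
      by (fact assms(1))
    show "kernel_column K x \<in> linf" if "x \<in> l1" for x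
      using kernel_column_bound[OF K_le that] by (rule linfI)
    show "kernel_form K x y = pairing y (kernel_column K x)" if "x \<in> l1" "y \<in> l1" for x y
      using K_le that by (rule kernel_form_eq_pairing_column)
    show "z2 (kernel_column K x) = pairing x a * z2 b" if "x \<in> l1" for x
      using z2 assms(2) triangle_kernel_column_asymptotic[OF that a_le b_le]
      unfolding K_def by (rule c0_perp_apply_asymptotic)
  qed
  ultimately show ?thesis
    by (intro exI[of _ "kernel_form K"]) blast
qed

end
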